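(* For $\omega>0$ and $S>0$ let $\sigma=e^{-\sqrt6 S}$, $A=\sqrt{1+\frac{\omega}{2S^2}}$, and $$\Xi(S,\omega)={}_2F_1(1,2A+2,2A+3,\sigma)=(2A+2)\sum_{n\ge0}\frac{\sigma^n}{n+2A+2}.$$ Then, as $S\to0^+$ with $\omega$ fixed, $$\Xi(S,\omega)=\xi_{-1}\bigl(2\sqrt{3\omega}\bigr)\frac{\sqrt6}{S}+\xi_0\bigl(2\sqrt{3\omega}\bigr)+O(S),$$ where $\xi_{-1}(r)=\frac16\,r\,e^rE_1(r)$, $\xi_0(r)=\frac12\bigl(4(1+r)e^rE_1(r)-3\bigr)$ and $E_1(r)=\int_r^\infty e^{-t}\frac{dt}{t}$. *)

theory Defs
  imports "HOL-Analysis.Analysis" "HOL-Library.Landau_Symbols"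
begin

definition E1 :: "real \<Rightarrow> real" where
  "E1 r = integral {r..} (\<lambda>t. exp (- t) / t)"

definition xi_m1 :: "real \<Rightarrow> real" where
  "xi_m1 r = (1/6) * r * exp r * E1 r"

definition xi_0 :: "real \<Rightarrow> real" where
  "xi_0 r = (1/2) * (4 * (1 + r) * exp r * E1 r - 3)"

definition sigma_par :: "real \<Rightarrow> real" where
  "sigma_par S = exp (- sqrt 6 * S)"

definition A_par :: "real \<Rightarrow> real \<Rightarrow> real" where
  "A_par S \<omega> = sqrt (1 + \<omega> / (2 * S\<^sup>2))"

definition Xi :: "real \<Rightarrow> real \<Rightarrow> real" where
  "Xi S \<omega> = (2 * A_par S \<omega> + 2) *
     (\<Sum>n. sigma_par S ^ n / (real n + 2 * A_par S \<omega> + 2))"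

end

theory Submission
  imports Defs "HOL-Real_Asymp.Real_Asymp"
begin

text \<open>
  Writing \<open>1 / (n + c) = (1 / c) \<integral>\<^sub>0\<^sup>\<infinity> exp (- (1 + n / c) v) dv\<close> turns the series
  \<open>c \<Sum> \<sigma>\<^sup>n / (n + c)\<close>, with \<open>c = 2A + 2\<close> and \<open>\<sigma> = exp (- s)\<close>, \<open>s = \<surd>6 S\<close>, into
  \<open>\<integral>\<^sub>0\<^sup>\<infinity> exp (- v) / (1 - exp (- (s + v / c))) dv\<close>. Since \<open>0 \<le> 1 / (1 - exp (- y)) - 1 / y - 1 / 2 \<le> y / 4\<close>
  for \<open>y > 0\<close>, this integral is \<open>c H(c s) + 1 / 2 + O(s + 1 / c)\<close>, where
  \<open>H(y) = exp y E\<^sub>1(y) = \<integral>\<^sub>0\<^sup>\<infinity> exp (- v) / (y + v) dv\<close>.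
  As \<open>S \<rightarrow> 0\<close>, \<open>x = c s\<close> tends to \<open>r = 2 \<surd>(3\<omega>)\<close> with \<open>x - r = O(S)\<close>, so
  \<open>c H(x) = r H(r) / s + (x - r) J / s\<close>, where the difference quotient \<open>J\<close> of \<open>y H(y)\<close> between
  \<open>r\<close> and \<open>x\<close> lies within \<open>O(x - r)\<close> of the derivative \<open>(1 + r) H(r) - 1\<close>: \<open>J\<close> is the integral
  of \<open>exp (- v) v / ((x + v) (r + v))\<close>, and the derivative is the same integral with \<open>x\<close> replaced by \<open>r\<close>.
\<close>

lemma exp_minus_one_le:
  fixes y :: real
  assumes "y \<ge> 0"
  shows "2 * (exp y - 1) \<le> y * (exp y + 1)"
proof -
  have "1 - exp t + t * exp t \<ge> 0" for t :: real
  proof -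
    have "(1 - t) * exp t \<le> exp (- t) * exp t"
      using exp_ge_add_one_self[of "-t"] by (intro mult_right_mono) auto
    then have "(1 - t) * exp t \<le> 1"
      by (simp flip: exp_add)
    then show ?thesis by (simp add: algebra_simps)
  qed
  moreover have "((\<lambda>t. t * (exp t + 1) - 2 * (exp t - 1)) has_real_derivative 1 - exp t + t * exp t) (at t)"
    for t :: real
    by (auto intro!: derivative_eq_intros simp: algebra_simps)
  ultimately show ?thesis
    using deriv_nonneg_imp_mono[where g = "\<lambda>t. t * (exp t + 1) - 2 * (exp t - 1)"
        and g' = "\<lambda>t. 1 - exp t + t * exp t" and a = 0 and b = y] assms
    by simp
qed

lemma exp_minus_one_ge:
  fixes y :: real
  assumes "y \<ge> 0"
  shows "2 * y * (exp y + 1) \<le> (y\<^sup>2 + 4) * (exp y - 1)"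
proof -
  have "t\<^sup>2 * exp t + 2 * exp t - 2 - 2 * t \<ge> 0" if "t \<ge> 0" for t :: real
  proof -
    have "(1 + t) * (t\<^sup>2 + 2) \<le> exp t * (t\<^sup>2 + 2)"
      using exp_ge_add_one_self[of t] by (intro mult_right_mono) auto
    moreover have "2 + 2 * t \<le> (1 + t) * (t\<^sup>2 + 2)"
      using that by (simp add: algebra_simps power2_eq_square)
    ultimately show ?thesis by (simp add: algebra_simps)
  qed
  moreover have "((\<lambda>t. (t\<^sup>2 + 4) * (exp t - 1) - 2 * t * (exp t + 1)) has_real_derivative
      t\<^sup>2 * exp t + 2 * exp t - 2 - 2 * t) (at t)" for t :: real
    by (auto intro!: derivative_eq_intros simp: algebra_simps power2_eq_square)
  ultimately show ?thesis
    using deriv_nonneg_imp_mono[where g = "\<lambda>t. (t\<^sup>2 + 4) * (exp t - 1) - 2 * t * (exp t + 1)"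
        and g' = "\<lambda>t. t\<^sup>2 * exp t + 2 * exp t - 2 - 2 * t" and a = 0 and b = y] assms
    by simp
qed

lemma inverse_one_minus_exp_bounds:
  fixes y :: real
  assumes "y > 0"
  shows "0 \<le> 1 / (1 - exp (- y)) - 1 / y - 1 / 2"
    and "1 / (1 - exp (- y)) - 1 / y - 1 / 2 \<le> y / 4"
proof -
  define p where "p = exp y"
  have p: "p > 1"
    using assms by (simp add: p_def)
  have inv: "1 / (1 - exp (- y)) = p / (p - 1)"
    using p by (simp add: p_def exp_minus field_simps)
  have "p / (p - 1) - 1 / y - 1 / 2 = (y * (p + 1) - 2 * (p - 1)) / (2 * y * (p - 1))"
    using p assms by (simp add: field_simps)
  also have "\<dots> \<ge> 0"
    using exp_minus_one_le[of y] p assms by (intro divide_nonneg_pos) (auto simp: p_def)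
  finally show "0 \<le> 1 / (1 - exp (- y)) - 1 / y - 1 / 2"
    by (simp add: inv)
  have "p / (p - 1) - 1 / y - 1 / 2 - y / 4 = (2 * y * (p + 1) - (y\<^sup>2 + 4) * (p - 1)) / (4 * y * (p - 1))"
    using p assms by (simp add: field_simps power2_eq_square)
  also have "\<dots> \<le> 0"
    using exp_minus_one_ge[of y] p assms by (intro divide_nonpos_pos) (auto simp: p_def)
  finally show "1 / (1 - exp (- y)) - 1 / y - 1 / 2 \<le> y / 4"
    by (simp add: inv)
qed

definition expE1 :: "real \<Rightarrow> real" where
  "expE1 y = exp y * E1 y"

lemma has_integral_expE1:
  fixes y :: real
  assumes y: "y > 0"
  shows "((\<lambda>v. exp (- v) / (y + v)) has_integral expE1 y) {0..}"
proof -
  let ?f = "\<lambda>t::real. exp (- t) / t"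
  have "?f integrable_on {y..}"
  proof (rule measurable_bounded_by_integrable_imp_integrable_real)
    show "?f \<in> borel_measurable (lebesgue_on {y..})"
      using y by (intro continuous_imp_measurable_on_sets_lebesgue continuous_intros) auto
    show "(\<lambda>t. 1 / y * exp (- 1 * t)) integrable_on {y..}"
      using integrable_on_cmult_left[OF integrable_on_exp_minus_to_infinity[of 1 y], of "1 / y"]
      by simp
    show "\<bar>?f t\<bar> \<le> 1 / y * exp (- 1 * t)" if "t \<in> {y..}" for t
      using that y by (simp add: field_simps)
  qed auto
  then have abs_int: "?f absolutely_integrable_on {y..}"
    by (rule nonnegative_absolutely_integrable_1) (use y in auto)
  have shift: "(\<lambda>v. y + v) ` {0..} = {y..}"
    using image_add_atLeast[of y "0::real"] by (simp add: add.commute)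
  have "(\<lambda>v. \<bar>1\<bar> * ?f (y + v)) absolutely_integrable_on {0..} \<and>
        integral {0..} (\<lambda>v. \<bar>1\<bar> * ?f (y + v)) = E1 y"
  proof (subst has_absolute_integral_change_of_variables_1'[where g = "\<lambda>v. y + v" and g' = "\<lambda>_. 1"])
    show "((\<lambda>v. y + v) has_real_derivative 1) (at v within {0..})" for v
      by (auto intro!: derivative_eq_intros)
  qed (use abs_int shift in \<open>auto simp: E1_def inj_on_def\<close>)
  then have "(\<lambda>v. ?f (y + v)) integrable_on {0..}" "integral {0..} (\<lambda>v. ?f (y + v)) = E1 y"
    by (auto simp: absolutely_integrable_on_def)
  then have "((\<lambda>v. ?f (y + v)) has_integral E1 y) {0..}"
    using has_integral_integrable_integral by blast
  from has_integral_mult_right[OF this, of "exp y"] show ?thesis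
    unfolding expE1_def
  proof (rule has_integral_eq[rotated])
    fix v :: real
    have "exp y * exp (- (y + v)) = exp (- v)"
      by (simp flip: exp_add)
    then show "exp y * (exp (- (y + v)) / (y + v)) = exp (- v) / (y + v)"
      by (metis times_divide_eq_right)
  qed
qed

lemma has_integral_exp_minus: "((\<lambda>v. exp (- v)) has_integral (1::real)) {0..}"
  using has_integral_exp_minus_to_infinity[of 1 0] by simp

lemma has_integral_geometric_kernel:
  fixes q c :: real
  assumes q: "0 \<le> q" "q < 1" and c: "c > 0"
  shows "((\<lambda>v. exp (- v) / (1 - q * exp (- v / c))) has_integral c * (\<Sum>n. q ^ n / (real n + c))) {0..}"
proof -
  define b where "b n = q ^ n / (real n + c)" for n
  have b_nonneg: "b n \<ge> 0" for n
    using q c by (simp add: b_def)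
  have "summable b"
  proof (rule summable_comparison_test)
    show "summable (\<lambda>n. q ^ n / c)"
      using q by (intro summable_divide summable_geometric) auto
    show "\<exists>N. \<forall>n\<ge>N. norm (b n) \<le> q ^ n / c"
      using q c by (auto simp: b_def intro!: frac_le)
  qed
  define f where "f N v = (\<Sum>n<N. q ^ n * exp (- (1 + real n / c) * v))" for N v
  have f_integral: "(f N has_integral c * (\<Sum>n<N. b n)) {0..}" for N
  proof -
    have "(f N has_integral (\<Sum>n<N. q ^ n * (exp (- (1 + real n / c) * 0) / (1 + real n / c)))) {0..}"
      unfolding f_def using c
      by (intro has_integral_sum has_integral_mult_right has_integral_exp_minus_to_infinity)
         (auto intro: add_pos_nonneg)
    also have "(\<Sum>n<N. q ^ n * (exp (- (1 + real n / c) * 0) / (1 + real n / c))) = c * (\<Sum>n<N. b n)"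
      unfolding sum_distrib_left using c by (intro sum.cong) (auto simp: b_def field_simps)
    finally show ?thesis .
  qed
  have f_geometric: "f N v = exp (- v) * (\<Sum>n<N. (q * exp (- v / c)) ^ n)" for N v
    unfolding f_def sum_distrib_left
  proof (intro sum.cong refl)
    fix n :: nat
    have "exp (- (1 + real n / c) * v) = exp (- v) * exp (real n * (- v / c))"
      by (simp flip: exp_add) (simp add: algebra_simps)
    also have "\<dots> = exp (- v) * exp (- v / c) ^ n"
      by (simp only: exp_of_nat_mult)
    finally show "q ^ n * exp (- (1 + real n / c) * v) = exp (- v) * (q * exp (- v / c)) ^ n"
      by (simp add: power_mult_distrib)
  qed
  have "(\<lambda>v. exp (- v) / (1 - q * exp (- v / c))) integrable_on {0..} \<and>
      (\<lambda>N. integral {0..} (f N)) \<longlonglongrightarrow> integral {0..} (\<lambda>v. exp (- v) / (1 - q * exp (- v / c)))"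
  proof (rule monotone_convergence_increasing)
    show "f N integrable_on {0..}" for N
      using f_integral by blast
    show "f N v \<le> f (Suc N) v" for N v
      unfolding f_def using q by simp
    show "(\<lambda>N. f N v) \<longlonglongrightarrow> exp (- v) / (1 - q * exp (- v / c))" if "v \<in> {0..}" for v
    proof -
      have "exp (- v / c) \<le> 1"
        using that c by simp
      then have "q * exp (- v / c) < 1"
        using q by (metis mult_less_le_imp_less mult_1_right exp_gt_zero)
      then have "norm (q * exp (- v / c)) < 1"
        using q by simp
      from tendsto_mult_left[OF geometric_sums[OF this, unfolded sums_def], of "exp (- v)"]
      show ?thesis
        by (simp add: f_geometric)
    qed
    show "bounded (range (\<lambda>N. integral {0..} (f N)))"
    proof (rule boundedI)
      fix z assume "z \<in> range (\<lambda>N. integral {0..} (f N))"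
      then obtain N where z: "z = c * (\<Sum>n<N. b n)"
        using f_integral integral_unique by blast
      have "(\<Sum>n<N. b n) \<le> suminf b"
        using \<open>summable b\<close> b_nonneg by (intro sum_le_suminf) auto
      then show "norm z \<le> c * suminf b"
        using z c b_nonneg by (simp add: sum_nonneg abs_of_nonneg)
    qed
  qed
  moreover have "(\<lambda>N. integral {0..} (f N)) \<longlonglongrightarrow> c * suminf b"
    using tendsto_mult_left[OF summable_LIMSEQ[OF \<open>summable b\<close>], of c]
    by (simp add: integral_unique[OF f_integral])
  ultimately have "(\<lambda>v. exp (- v) / (1 - q * exp (- v / c))) integrable_on {0..}"
    and "integral {0..} (\<lambda>v. exp (- v) / (1 - q * exp (- v / c))) = c * suminf b"
    using LIMSEQ_unique by blast+
  then show ?thesis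
    unfolding b_def using has_integral_integrable_integral by blast
qed

lemma has_integral_exp_div_square:
  fixes r :: real
  assumes r: "r > 0"
  shows "((\<lambda>v. exp (- v) / (r + v)\<^sup>2) has_integral 1 / r - expE1 r) {0..}"
proof -
  let ?g = "\<lambda>v. exp (- v) / (r + v) + exp (- v) / (r + v)\<^sup>2"
  \<comment> \<open>\<open>?g\<close> is the derivative of \<open>- exp (- v) / (r + v)\<close>\<close>
  have "(?g has_integral 1 / r) {0..}"
  proof (rule has_integral_to_inf)
    show "?g integrable_on {0..y}" for y
      using r by (intro integrable_continuous_interval continuous_intros) auto
    show "0 \<le> ?g v" if "v \<ge> 0" for v
      using that r by auto
    have "(?g has_integral (- exp (- y) / (r + y) - (- exp (- 0) / (r + 0)))) {0..y}" if "y \<ge> 0" for y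
      using that r
      by (intro fundamental_theorem_of_calculus)
         (auto intro!: derivative_eq_intros simp flip: has_real_derivative_iff_has_vector_derivative
               simp: divide_simps power2_eq_square)
    then have "\<forall>\<^sub>F y in at_top. integral {0..y} ?g = 1 / r - exp (- y) / (r + y)"
      unfolding eventually_at_top_linorder by (intro exI[of _ 0]) (auto dest!: integral_unique)
    moreover have "((\<lambda>y. 1 / r - exp (- y) / (r + y)) \<longlongrightarrow> 1 / r) at_top"
      using r by real_asymp
    ultimately show "((\<lambda>y. integral {0..y} ?g) \<longlongrightarrow> 1 / r) at_top"
      by (simp add: tendsto_cong)
  qed
  from has_integral_diff[OF this has_integral_expE1[OF r]] show ?thesis
    by simp
qed

lemma has_integral_expE1_derivative:
  fixes r :: real
  assumes r: "r > 0"
  shows "((\<lambda>v. exp (- v) * v / (r + v)\<^sup>2) has_integral (1 + r) * expE1 r - 1) {0..}"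
proof -
  have "((\<lambda>v. exp (- v) / (r + v) - r * (exp (- v) / (r + v)\<^sup>2)) has_integral
      expE1 r - r * (1 / r - expE1 r)) {0..}"
    by (intro has_integral_diff has_integral_mult_right has_integral_expE1 has_integral_exp_div_square r)
  then show ?thesis
  proof (rule has_integral_eq_rhs[OF has_integral_eq[rotated]])
    fix v :: real
    assume "v \<in> {0..}"
    then have "r + v > 0"
      using r by auto
    then show "exp (- v) / (r + v) - r * (exp (- v) / (r + v)\<^sup>2) = exp (- v) * v / (r + v)\<^sup>2"
      by (simp add: divide_simps power2_eq_square) (simp add: algebra_simps)
  qed (use r in \<open>simp add: field_simps\<close>)
qed

lemma has_integral_expE1_difference_quotient:
  fixes r x :: real
  assumes r: "r > 0" and x: "x > 0" and "x \<noteq> r"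
  shows "((\<lambda>v. exp (- v) * v / ((x + v) * (r + v))) has_integral
           (x * expE1 x - r * expE1 r) / (x - r)) {0..}"
proof -
  have "((\<lambda>v. x * (exp (- v) / (x + v)) - r * (exp (- v) / (r + v))) has_integral
      x * expE1 x - r * expE1 r) {0..}"
    by (intro has_integral_diff has_integral_mult_right has_integral_expE1 r x)
  from has_integral_divide[OF this, of "x - r"] show ?thesis
  proof (rule has_integral_eq[rotated])
    fix v :: real
    assume "v \<in> {0..}"
    then have "r + v > 0" "x + v > 0"
      using r x by auto
    then show "(x * (exp (- v) / (x + v)) - r * (exp (- v) / (r + v))) / (x - r) =
        exp (- v) * v / ((x + v) * (r + v))"
      using \<open>x \<noteq> r\<close> by (simp add: divide_simps) (simp add: algebra_simps)
  qed
qed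

lemma series_expE1_remainder_bounds:
  fixes s c :: real
  assumes s: "s > 0" and c: "c > 0"
  defines "R \<equiv> c * (\<Sum>n. exp (- s) ^ n / (real n + c)) - c * expE1 (c * s) - 1 / 2"
  shows "0 \<le> R" and "R \<le> s + 4 / c"
proof -
  define g where "g y = 1 / (1 - exp (- y)) - 1 / y - 1 / 2" for y :: real
  have y_pos: "s + v / c > 0" if "v \<ge> 0" for v
    using that s c by (auto intro: add_pos_nonneg)
  have "((\<lambda>v. exp (- v) / (1 - exp (- s) * exp (- v / c)) - c * (exp (- v) / (c * s + v))
      - exp (- v) / 2) has_integral R) {0..}"
    unfolding R_def using s c
    by (intro has_integral_diff has_integral_geometric_kernel has_integral_mult_right
        has_integral_expE1 has_integral_divide[OF has_integral_exp_minus, simplified]) auto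
  then have R_integral: "((\<lambda>v. exp (- v) * g (s + v / c)) has_integral R) {0..}"
  proof (rule has_integral_eq[rotated])
    fix v :: real
    assume "v \<in> {0..}"
    then have "c * s + v > 0"
      using s c by (auto intro: add_pos_nonneg)
    then have "1 / (s + v / c) = c / (c * s + v)"
      using c by (simp add: field_simps)
    moreover have "exp (- s) * exp (- v / c) = exp (- (s + v / c))"
      by (simp flip: exp_add)
    ultimately show "exp (- v) / (1 - exp (- s) * exp (- v / c)) - c * (exp (- v) / (c * s + v))
        - exp (- v) / 2 = exp (- v) * g (s + v / c)"
      by (simp add: g_def algebra_simps)
  qed
  show "0 \<le> R"
    by (rule has_integral_nonneg[OF R_integral])
       (use inverse_one_minus_exp_bounds(1)[OF y_pos] in \<open>auto simp: g_def\<close>)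
  have bound_integral: "((\<lambda>v. s * exp (- 1 * v) + 2 / c * exp (- (1 / 2) * v)) has_integral
      s * (exp (- 1 * 0) / 1) + 2 / c * (exp (- (1 / 2) * 0) / (1 / 2))) {0..}"
    by (intro has_integral_add has_integral_mult_right has_integral_exp_minus_to_infinity) auto
  have "R \<le> s * (exp (- 1 * 0) / 1) + 2 / c * (exp (- (1 / 2) * 0) / (1 / 2))"
  proof (rule has_integral_le[OF R_integral bound_integral])
    fix v :: real
    assume "v \<in> {0..}"
    then have v: "v \<ge> 0"
      by simp
    have "exp (- v) * g (s + v / c) \<le> exp (- v) * ((s + v / c) / 4)"
      using inverse_one_minus_exp_bounds(2)[OF y_pos[OF v]] by (simp add: g_def)
    also have "\<dots> \<le> s * exp (- v) + v * exp (- v) / c"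
      using s c v by (simp add: field_simps)
    also have "v * exp (- v) \<le> 2 * exp (- v / 2)"
    proof -
      have "v \<le> 2 * exp (v / 2)"
        using exp_ge_add_one_self[of "v / 2"] by linarith
      then have "v * exp (- v) \<le> 2 * exp (v / 2) * exp (- v)"
        by (rule mult_right_mono) simp
      also have "\<dots> = 2 * exp (- v / 2)"
        by (simp flip: exp_add)
      finally show ?thesis .
    qed
    finally show "exp (- v) * g (s + v / c) \<le> s * exp (- 1 * v) + 2 / c * exp (- (1 / 2) * v)"
      using c by (simp add: divide_right_mono)
  qed
  then show "R \<le> s + 4 / c"
    by simp
qed

lemma expE1_difference_quotient_bounds:
  fixes r x :: real
  assumes r: "r > 0" and xr: "x > r"
  defines "J \<equiv> (x * expE1 x - r * expE1 r) / (x - r)"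
  shows "0 \<le> J" and "J \<le> 1 / r" and "\<bar>J - ((1 + r) * expE1 r - 1)\<bar> \<le> (x - r) / r\<^sup>2"
proof -
  have J_integral: "((\<lambda>v. exp (- v) * v / ((x + v) * (r + v))) has_integral J) {0..}"
    unfolding J_def using r xr by (intro has_integral_expE1_difference_quotient) auto
  have D_integral: "((\<lambda>v. exp (- v) * v / (r + v)\<^sup>2 - exp (- v) * v / ((x + v) * (r + v))) has_integral
      (1 + r) * expE1 r - 1 - J) {0..}"
    by (intro has_integral_diff has_integral_expE1_derivative J_integral r)
  have exp_integral: "((\<lambda>v. K * exp (- v)) has_integral K) {0..}" for K :: real
    using has_integral_mult_right[OF has_integral_exp_minus, of K] by simp
  show "0 \<le> J"
    by (rule has_integral_nonneg[OF J_integral]) (use r xr in auto)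
  show "J \<le> 1 / r"
  proof (rule has_integral_le[OF J_integral exp_integral])
    fix v :: real
    assume "v \<in> {0..}"
    then have "v * r \<le> (x + v) * (r + v)"
      using r xr by (intro mult_mono) auto
    then have "v / ((x + v) * (r + v)) \<le> 1 / r"
      using \<open>v \<in> {0..}\<close> r xr by (simp add: divide_simps)
    then have "exp (- v) * (v / ((x + v) * (r + v))) \<le> exp (- v) * (1 / r)"
      by (rule mult_left_mono) simp
    then show "exp (- v) * v / ((x + v) * (r + v)) \<le> 1 / r * exp (- v)"
      by simp
  qed
  have D_eq: "exp (- v) * v / (r + v)\<^sup>2 - exp (- v) * v / ((x + v) * (r + v)) =
      exp (- v) * (x - r) * (v / ((x + v) * (r + v)\<^sup>2))" if "v \<ge> 0" for v
    using that r xr by (simp add: divide_simps power2_eq_square) (simp add: algebra_simps)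
  have "0 \<le> (1 + r) * expE1 r - 1 - J"
    by (rule has_integral_nonneg[OF D_integral]) (use r xr in \<open>auto simp: D_eq\<close>)
  moreover have "(1 + r) * expE1 r - 1 - J \<le> (x - r) / r\<^sup>2"
  proof (rule has_integral_le[OF D_integral exp_integral])
    fix v :: real
    assume "v \<in> {0..}"
    then have v: "v \<ge> 0"
      by simp
    have "v * r\<^sup>2 \<le> (x + v) * (r + v)\<^sup>2"
      using v r xr by (intro mult_mono power_mono) auto
    then have "v / ((x + v) * (r + v)\<^sup>2) \<le> 1 / r\<^sup>2"
      using v r xr by (simp add: divide_simps)
    then have "exp (- v) * (x - r) * (v / ((x + v) * (r + v)\<^sup>2)) \<le> exp (- v) * (x - r) * (1 / r\<^sup>2)"
      using xr by (intro mult_left_mono) auto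
    then show "exp (- v) * v / (r + v)\<^sup>2 - exp (- v) * v / ((x + v) * (r + v)) \<le> (x - r) / r\<^sup>2 * exp (- v)"
      unfolding D_eq[OF v] by (simp add: mult_ac)
  qed
  ultimately show "\<bar>J - ((1 + r) * expE1 r - 1)\<bar> \<le> (x - r) / r\<^sup>2"
    by simp
qed

lemma series_expansion_bound:
  fixes s c r :: real
  assumes s: "s > 0" and r: "r > 0"
    and gap: "0 \<le> c - 2 - r / s" "c - 2 - r / s \<le> 4 * s / r"
  shows "\<bar>c * (\<Sum>n. exp (- s) ^ n / (real n + c)) - (r * expE1 r / s + 2 * ((1 + r) * expE1 r - 1) + 1 / 2)\<bar>
           \<le> s * (1 + 4 / r + 8 / r\<^sup>2 + 8 * s / r ^ 3)"
proof -
  define d where "d = c - 2 - r / s"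
  define x where "x = c * s"
  define R where "R = c * (\<Sum>n. exp (- s) ^ n / (real n + c)) - c * expE1 x - 1 / 2"
  define J where "J = (x * expE1 x - r * expE1 r) / (x - r)"
  define Jr where "Jr = (1 + r) * expE1 r - 1"
  have c_ge: "c \<ge> r / s"
    using gap by simp
  then have c: "c > 0"
    using r s by (smt (verit) divide_pos_pos)
  have x_minus_r: "x - r = s * (d + 2)"
    using s by (simp add: x_def d_def field_simps)
  moreover have "s * (d + 2) > 0"
    using s gap by (simp add: d_def)
  ultimately have xr: "x > r"
    by simp
  have "R \<ge> 0" "R \<le> s + 4 / c"
    using series_expE1_remainder_bounds[OF s c] by (simp_all add: R_def x_def mult.commute)
  moreover have "4 / c \<le> 4 / (r / s)"
    using c_ge c r s by (intro divide_left_mono) auto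
  ultimately have R_bound: "\<bar>R\<bar> \<le> s + 4 * s / r"
    by simp
  have J: "0 \<le> J" "J \<le> 1 / r" and J_bound: "\<bar>J - Jr\<bar> \<le> (x - r) / r\<^sup>2"
    using expE1_difference_quotient_bounds[OF r xr] by (simp_all add: J_def Jr_def)
  have "d * J \<le> 4 * s / r * (1 / r)"
    using gap J by (intro mult_mono) (auto simp: d_def)
  then have dJ_bound: "\<bar>d * J\<bar> \<le> 4 * s / r * (1 / r)"
    using gap J by (simp add: d_def)
  have "(x - r) / r\<^sup>2 \<le> s * (2 + 4 * s / r) / r\<^sup>2"
    using gap s unfolding x_minus_r d_def by (intro divide_right_mono mult_left_mono) auto
  with J_bound have J_Jr_bound: "\<bar>2 * (J - Jr)\<bar> \<le> 2 * (s * (2 + 4 * s / r) / r\<^sup>2)"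
    by simp
  have "x * expE1 x = r * expE1 r + (x - r) * J"
    using xr by (simp add: J_def)
  then have "c * expE1 x = r * expE1 r / s + (d + 2) * J"
    using s unfolding x_minus_r by (simp add: x_def field_simps)
  then have "c * (\<Sum>n. exp (- s) ^ n / (real n + c)) - (r * expE1 r / s + 2 * Jr + 1 / 2) = R + d * J + 2 * (J - Jr)"
    by (simp add: R_def algebra_simps)
  then have "\<bar>c * (\<Sum>n. exp (- s) ^ n / (real n + c)) - (r * expE1 r / s + 2 * Jr + 1 / 2)\<bar>
      \<le> s + 4 * s / r + 4 * s / r * (1 / r) + 2 * (s * (2 + 4 * s / r) / r\<^sup>2)"
    using R_bound dJ_bound J_Jr_bound by linarith
  also have "\<dots> = s * (1 + 4 / r + 8 / r\<^sup>2 + 8 * s / r ^ 3)"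
    using r by (simp add: field_simps power2_eq_square power3_eq_cube)
  finally show ?thesis
    by (simp add: Jr_def)
qed

lemma A_par_gap_bounds:
  fixes \<omega> S :: real
  assumes \<omega>: "\<omega> > 0" and S: "S > 0"
  defines "r \<equiv> 2 * sqrt (3 * \<omega>)" and "s \<equiv> sqrt 6 * S"
  shows "0 \<le> 2 * A_par S \<omega> - r / s" and "2 * A_par S \<omega> - r / s \<le> 4 * s / r"
proof -
  define a where "a = r / s"
  define B where "B = 2 * A_par S \<omega>"
  have a: "a > 0"
    using \<omega> S by (simp add: a_def r_def s_def)
  have "B \<ge> 0"
    using \<omega> by (auto simp: B_def A_par_def intro!: add_nonneg_nonneg)
  have "a\<^sup>2 = 4 * (3 * \<omega>) / (6 * S\<^sup>2)"
    using \<omega> by (simp add: a_def r_def s_def power_divide power_mult_distrib)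
  also have "\<dots> = 2 * \<omega> / S\<^sup>2"
    by simp
  finally have a_sq: "a\<^sup>2 = 2 * \<omega> / S\<^sup>2" .
  have "B\<^sup>2 = 4 * (1 + \<omega> / (2 * S\<^sup>2))"
    using \<omega> by (simp add: B_def A_par_def power_mult_distrib)
  also have "\<dots> = 4 + a\<^sup>2"
    by (simp add: a_sq algebra_simps)
  finally have B_sq: "B\<^sup>2 = 4 + a\<^sup>2" .
  have "a \<le> B"
    by (rule power2_le_imp_le) (use B_sq \<open>B \<ge> 0\<close> in simp_all)
  have "(B - a) * (B + a) = 4"
    using B_sq by (simp add: algebra_simps power2_eq_square)
  then have "(B - a) * a \<le> 4"
    using \<open>a \<le> B\<close> a by (smt (verit) mult_left_mono)
  then have "B - a \<le> 4 / a"
    using a by (simp add: pos_le_divide_eq)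
  with \<open>a \<le> B\<close> show "0 \<le> B - r / s" "B - r / s \<le> 4 * s / r"
    by (simp_all add: a_def)
qed

lemma Xi_expansion_bound:
  fixes \<omega> S :: real
  assumes \<omega>: "\<omega> > 0" and S: "S > 0" "S \<le> 1"
  defines "r \<equiv> 2 * sqrt (3 * \<omega>)"
  shows "\<bar>Xi S \<omega> - (xi_m1 r * sqrt 6 / S + xi_0 r)\<bar> \<le> sqrt 6 * (1 + 4 / r + 8 / r\<^sup>2 + 8 * sqrt 6 / r ^ 3) * S"
proof -
  define s where "s = sqrt 6 * S"
  have s: "s > 0" "s \<le> sqrt 6"
    using S by (simp_all add: s_def)
  have r: "r > 0"
    using \<omega> by (simp add: r_def)
  have "0 \<le> (2 * A_par S \<omega> + 2) - 2 - r / s" "(2 * A_par S \<omega> + 2) - 2 - r / s \<le> 4 * s / r"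
    using A_par_gap_bounds[OF \<omega> S(1), folded r_def s_def] by simp_all
  note bound = series_expansion_bound[OF s(1) r this]
  have "Xi S \<omega> = (2 * A_par S \<omega> + 2) * (\<Sum>n. exp (- s) ^ n / (real n + (2 * A_par S \<omega> + 2)))"
    by (simp add: Xi_def sigma_par_def s_def add.assoc)
  moreover have "xi_m1 r * sqrt 6 / S = r * expE1 r / s"
    using S by (simp add: xi_m1_def expE1_def s_def field_simps)
  moreover have "xi_0 r = 2 * ((1 + r) * expE1 r - 1) + 1 / 2"
    by (simp add: xi_0_def expE1_def algebra_simps)
  ultimately have "\<bar>Xi S \<omega> - (xi_m1 r * sqrt 6 / S + xi_0 r)\<bar> \<le> s * (1 + 4 / r + 8 / r\<^sup>2 + 8 * s / r ^ 3)"
    using bound by (simp only: add.assoc)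
  also have "\<dots> \<le> s * (1 + 4 / r + 8 / r\<^sup>2 + 8 * sqrt 6 / r ^ 3)"
    using s r by (intro mult_left_mono add_left_mono divide_right_mono) auto
  finally show ?thesis
    by (simp add: s_def mult_ac)
qed

theorem mainTheorem15:
  fixes \<omega> :: real
  assumes "\<omega> > 0"
  shows "(\<lambda>S. Xi S \<omega> - (xi_m1 (2 * sqrt (3 * \<omega>)) * sqrt 6 / S + xi_0 (2 * sqrt (3 * \<omega>))))
           \<in> O[at_right (0::real)](\<lambda>S. S)"
proof (rule bigoI)
  define r where "r = 2 * sqrt (3 * \<omega>)"
  have "\<forall>\<^sub>F S in at_right 0. S > 0 \<and> S \<le> (1::real)"
    unfolding eventually_at_right_field by (intro exI[of _ 1]) auto
  then show "\<forall>\<^sub>F S in at_right 0. norm (Xi S \<omega> - (xi_m1 r * sqrt 6 / S + xi_0 r))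
      \<le> sqrt 6 * (1 + 4 / r + 8 / r\<^sup>2 + 8 * sqrt 6 / r ^ 3) * norm S"
    by eventually_elim (use Xi_expansion_bound[OF assms] in \<open>simp add: r_def\<close>)
qed

end
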